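(* For $n\ge1$ and $0\le k<n$, \[ a_{n,k}=na_{n-1,k-1}+\frac{n(n-1)}{n-k}a_{n-1,k}, \] and for $n\ge2$ and $0\le k<n$, \[ b_{n,k}=nb_{n-1,k-1}+\frac{n(n-1)}{n-k}b_{n-1,k}. \] For $n\ge1$ and $0\le k\le n$, $a_{n,k}=b_{n,k}+(n-k+1)a_{n,k-1}$. For $n\ge1$, \[ b_{n,n}=na_{n-1,n-1}+\sum_{k=1}^{n-1}\binom{n-1}{k}\,k\,b_{k,k}\,a_{n-k-1,n-k-1}. \]
   Context: Let $A$ be the ring of formal series $\sum_{n\ge0}q_n(y)x^{-n}$, each $q_n$ a complex polynomial of degree at most $n$, with termwise formal derivatives $a_x=-\sum_{n\ge1}nq_n(y)x^{-n-1}$, $a_y=\sum_{n\ge1}q_n'(y)x^{-n}$, and formal logarithm $\log(1+u)=\sum_{k\ge1}(-1)^{k+1}u^k/k$. Let $V\in A$ be the unique solution of $V=1+\frac{y}{x}-\frac{1}{x}V-V_x-\frac{1}{x}V_y+\frac{1}{x}\log V$, and define $P_{n-1},Q_n$ by $V=1+\sum_{n\ge1}P_{n-1}(y)x^{-n}$, $\log V=\sum_{n\ge1}Q_n(y)x^{-n}$. For $n\ge1$ define coefficients $a_{n,k},b_{n,k}$ ($0\le k\le n$) by $P_n(y)=\frac{(-1)^{n+1}}{n!}\sum_{k=0}^n(-1)^ka_{n,k}y^{n-k}$ and $Q_n(y)=\frac{(-1)^{n+1}}{n!}\sum_{k=0}^n(-1)^kb_{n,k}y^{n-k}$. Conventions: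 for $n\ge1$, $a_{n,k}=b_{n,k}=0$ when $k<0$ or $k>n$; and $a_{0,0}=1$, $a_{0,-1}=1$, $a_{0,k}=0$ for other $k$ (so that $P_0(y)=y-1=-\sum_{k=-1}^0(-1)^ka_{0,k}y^{-k}$). *)

theory Defs
  imports "HOL-Computational_Algebra.Polynomial"
begin

text \<open>An element of the ring A, i.e. the formal series sum over n of q_n(y) x^(-n),
  is represented by its coefficient sequence q :: nat => complex poly.\<close>
type_synonym fser = "nat \<Rightarrow> complex poly"

definition inA :: "fser \<Rightarrow> bool" where
  "inA q \<longleftrightarrow> (\<forall>n. degree (q n) \<le> n)"

definition fs_one :: fser where
  "fs_one = (\<lambda>n. if n = 0 then 1 else 0)"

definition fs_mult :: "fser \<Rightarrow> fser \<Rightarrow> fser" where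
  "fs_mult f g = (\<lambda>n. \<Sum>i\<le>n. f i * g (n - i))"

primrec fs_pow :: "fser \<Rightarrow> nat \<Rightarrow> fser" where
  "fs_pow f 0 = fs_one"
| "fs_pow f (Suc k) = fs_mult f (fs_pow f k)"

text \<open>Multiplication by 1/x.\<close>
definition fs_shift :: "fser \<Rightarrow> fser" where
  "fs_shift f = (\<lambda>n. if n = 0 then 0 else f (n - 1))"

text \<open>Termwise derivative in x: a_x = - sum_{n>=1} n q_n x^(-n-1).\<close>
definition fs_dx :: "fser \<Rightarrow> fser" where
  "fs_dx f = (\<lambda>n. if n = 0 then 0 else - (of_nat (n - 1)) * f (n - 1))"

definition fs_dy :: "fser \<Rightarrow> fser" where
  "fs_dy f = (\<lambda>n. pderiv (f n))"

text \<open>Formal logarithm log(1+u) = sum_{k>=1} (-1)^(k+1) u^k / k, applied with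
  u = V - 1.  When the constant term of V is 1 (which is forced for the solution V),
  u^k only contributes to coefficients of index >= k, so the n-th coefficient
  is the finite sum over k = 1..n.\<close>
definition fs_log :: "fser \<Rightarrow> fser" where
  "fs_log V = (\<lambda>n. \<Sum>k\<in>{1..n}.
      smult ((-1) ^ (k + 1) / of_nat k) (fs_pow (\<lambda>m. V m - fs_one m) k n))"

definition fs_y_over_x :: fser where
  "fs_y_over_x = (\<lambda>n. if n = 1 then [:0, 1:] else 0)"

text \<open>Right-hand side of V = 1 + y/x - V/x - V_x - V_y/x + (log V)/x.\<close>
definition rhsV :: "fser \<Rightarrow> fser" where
  "rhsV V = (\<lambda>n. fs_one n + fs_y_over_x n - fs_shift V n - fs_dx V n
                 - fs_shift (fs_dy V) n + fs_shift (fs_log V) n)"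

definition Vsol :: fser where
  "Vsol = (THE V. inA V \<and> V = rhsV V)"

text \<open>V = 1 + sum_{n>=1} P_{n-1} x^(-n), log V = sum_{n>=1} Q_n x^(-n).\<close>
definition Pp :: "nat \<Rightarrow> complex poly" where
  "Pp m = Vsol (m + 1)"

definition Qq :: "nat \<Rightarrow> complex poly" where
  "Qq n = fs_log Vsol n"

text \<open>a_{n,k}: for n >= 1 read off from
  P_n(y) = (-1)^(n+1)/n! * sum_{k=0..n} (-1)^k a_{n,k} y^(n-k), zero outside 0..n;
  a_{0,0} = a_{0,-1} = 1, a_{0,k} = 0 otherwise.\<close>
definition acoef :: "nat \<Rightarrow> int \<Rightarrow> complex" where
  "acoef n k =
     (if n = 0 then (if k = 0 \<or> k = -1 then 1 else 0)
      else if 0 \<le> k \<and> k \<le> int n then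
        (-1) ^ (n + 1) * (-1) ^ nat k * fact n * coeff (Pp n) (n - nat k)
      else 0)"

text \<open>b_{n,k} for n >= 1 (value at n = 0 is never used).\<close>
definition bcoef :: "nat \<Rightarrow> int \<Rightarrow> complex" where
  "bcoef n k =
     (if n \<ge> 1 \<and> 0 \<le> k \<and> k \<le> int n then
        (-1) ^ (n + 1) * (-1) ^ nat k * fact n * coeff (Qq n) (n - nat k)
      else 0)"

end

theory Submission
  imports Defs "HOL-Computational_Algebra.Formal_Power_Series"
begin

unbundle fps_syntax

text \<open>
  Put \<open>t = 1/x\<close>. An element of \<open>A\<close> is then a power series in \<open>t\<close> with polynomial
  coefficients, \<open>-x \<partial>/\<partial>x\<close> becomes the Euler operator \<open>\<theta> = t d/dt\<close>, and the defining
  equation expresses the coefficient of \<open>t^(n+1)\<close> in \<open>V\<close> through lower ones, so it has a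
  unique solution, obtained by iteration. Applying \<open>\<theta>\<close> and \<open>\<partial>/\<partial>y\<close> to the equation and
  using the logarithmic derivatives \<open>V \<theta>(log V) = \<theta>V\<close> and \<open>V \<partial>\<^sub>y(log V) = \<partial>\<^sub>yV\<close>, one
  finds that \<open>H = tV - t\<theta>V + t\<partial>\<^sub>yV - \<partial>\<^sub>yV\<close> satisfies a homogeneous equation of the same
  kind, hence \<open>H = 0\<close>. Coefficientwise this says \<open>P'(n) = P'(n-1) - (n-1) P(n-1)\<close>, and
  substituted back into the equation it gives \<open>Q(n) = P(n) + P'(n)\<close>. Comparing coefficients
  of \<open>y\<close> in these identities yields the recurrences for \<open>a\<close> and \<open>b\<close> and the relation
  between them; the formula for \<open>b(n,n)\<close> is the constant term in \<open>y\<close> of the coefficient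
  of \<open>t^n\<close> in \<open>\<theta>(log V) V = \<theta>V\<close>.
\<close>

section \<open>Causal equations\<close>

definition causal :: "((nat \<Rightarrow> 'a) \<Rightarrow> nat \<Rightarrow> 'a) \<Rightarrow> bool" where
  "causal F \<longleftrightarrow> (\<forall>f g n. (\<forall>m<n. f m = g m) \<longrightarrow> F f n = F g n)"

lemma causalD:
  assumes "causal F" and "\<And>m. m < n \<Longrightarrow> f m = g m"
  shows "F f n = F g n"
  using assms unfolding causal_def by blast

lemma causal_fixpoint_unique:
  assumes F: "causal F" and f: "f = F f" and g: "g = F g"
  shows "f = g"
proof -
  have "\<forall>m<n. f m = g m" for n
  proof (induction n)
    case (Suc n)
    have "f n = F f n" by (rule fun_cong[OF f])
    also have "\<dots> = F g n" using Suc.IH by (intro causalD[OF F]) blast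
    also have "\<dots> = g n" by (rule fun_cong[OF g, symmetric])
    finally have "f n = g n" .
    with Suc.IH show ?case by (auto simp: less_Suc_eq)
  qed simp
  then show ?thesis by blast
qed

lemma causal_iterate_stable:
  assumes F: "causal F" and "m < k"
  shows "(F ^^ Suc k) f m = (F ^^ k) f m"
  using \<open>m < k\<close>
proof (induction k arbitrary: m)
  case (Suc k)
  have "F ((F ^^ Suc k) f) m = F ((F ^^ k) f) m"
    by (rule causalD[OF F]) (use Suc in auto)
  then show ?case unfolding funpow.simps(2) comp_apply .
qed simp

lemma causal_iterate_eq:
  assumes F: "causal F" and "m < k"
  shows "(F ^^ k) f m = (F ^^ Suc m) f m"
proof -
  from \<open>m < k\<close> have "Suc m \<le> k" by simp
  then show ?thesis
  proof (induction k rule: dec_induct)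
    case (step k)
    with causal_iterate_stable[OF F, of m k f] show ?case by simp
  qed (rule refl)
qed

lemma causal_fixpoint:
  assumes F: "causal F"
  shows "(\<lambda>n. (F ^^ Suc n) f n) = F (\<lambda>n. (F ^^ Suc n) f n)"
proof
  fix n
  have "F (\<lambda>m. (F ^^ Suc m) f m) n = F ((F ^^ n) f) n"
    by (rule causalD[OF F]) (simp add: causal_iterate_eq[OF F])
  then show "(F ^^ Suc n) f n = F (\<lambda>m. (F ^^ Suc m) f m) n"
    unfolding funpow.simps(2) comp_apply by (rule sym)
qed

lemma fs_mult_cong:
  assumes "\<And>m. m \<le> n \<Longrightarrow> f m = f' m" and "\<And>m. m \<le> n \<Longrightarrow> g m = g' m"
  shows "fs_mult f g n = fs_mult f' g' n"
  unfolding fs_mult_def using assms by (intro sum.cong) auto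

lemma fs_pow_cong:
  assumes "\<And>m. m \<le> n \<Longrightarrow> f m = g m"
  shows "fs_pow f k n = fs_pow g k n"
  using assms
proof (induction k arbitrary: n)
  case (Suc k)
  show ?case
    unfolding fs_pow.simps by (rule fs_mult_cong) (use Suc in auto)
qed simp

lemma fs_log_cong:
  assumes "\<And>m. m \<le> n \<Longrightarrow> V m = W m"
  shows "fs_log V n = fs_log W n"
  unfolding fs_log_def using assms by (intro sum.cong refl arg_cong[where f = "smult _"] fs_pow_cong) auto

lemma causal_rhsV: "causal rhsV"
  unfolding causal_def
proof (intro allI impI)
  fix V W :: fser and n
  assume VW: "\<forall>m<n. V m = W m"
  show "rhsV V n = rhsV W n"
  proof (cases n)
    case (Suc k)
    then have "fs_log V k = fs_log W k" using VW by (intro fs_log_cong) auto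
    with Suc VW show ?thesis by (simp add: rhsV_def fs_shift_def fs_dx_def fs_dy_def)
  qed (simp add: rhsV_def fs_shift_def fs_dx_def)
qed

lemma inA_fs_one: "inA fs_one"
  unfolding inA_def fs_one_def by simp

lemma inA_fs_mult:
  assumes "inA f" and "inA g"
  shows "inA (fs_mult f g)"
  unfolding inA_def fs_mult_def
proof (intro allI degree_sum_le)
  fix n i :: nat assume "i \<in> {..n}"
  then have "degree (f i) \<le> i" "degree (g (n - i)) \<le> n - i" "i \<le> n"
    using assms by (auto simp: inA_def)
  then show "degree (f i * g (n - i)) \<le> n"
    using degree_mult_le[of "f i" "g (n - i)"] by linarith
qed simp

lemma inA_fs_pow: "inA f \<Longrightarrow> inA (fs_pow f k)"
  by (induction k) (simp_all add: inA_fs_one inA_fs_mult)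

lemma inA_fs_log:
  assumes "inA V"
  shows "inA (fs_log V)"
proof -
  have U: "inA (\<lambda>m. V m - fs_one m)"
    using assms inA_fs_one unfolding inA_def by (auto intro: degree_diff_le)
  show ?thesis
    unfolding inA_def fs_log_def
  proof (intro allI degree_sum_le)
    fix n k :: nat
    show "degree (smult ((- 1) ^ (k + 1) / of_nat k) (fs_pow (\<lambda>m. V m - fs_one m) k n)) \<le> n"
      using inA_fs_pow[OF U, of k] unfolding inA_def by (meson degree_smult_le order_trans)
  qed simp
qed

lemma inA_rhsV:
  assumes V: "inA V"
  shows "inA (rhsV V)"
  unfolding inA_def
proof
  fix n
  show "degree (rhsV V n) \<le> n"
  proof (cases n)
    case (Suc k)
    have V_k: "degree (V k) \<le> n" and log_k: "degree (fs_log V k) \<le> n"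
      using V inA_fs_log[OF V] Suc unfolding inA_def by (metis le_SucI)+
    have "degree (of_nat k * V k) \<le> n"
      using V_k degree_mult_le[of "of_nat k" "V k"] by simp
    moreover have "degree (pderiv (V k)) \<le> n"
      using V_k degree_pderiv[of "V k"] by linarith
    moreover have "degree (fs_y_over_x n) \<le> n" "degree (fs_one n) \<le> n"
      using Suc by (simp_all add: fs_y_over_x_def fs_one_def)
    moreover have "rhsV V n = fs_one n + fs_y_over_x n - V k + of_nat k * V k - pderiv (V k) + fs_log V k"
      using Suc by (simp add: rhsV_def fs_shift_def fs_dx_def fs_dy_def)
    ultimately show ?thesis
      using V_k log_k by (simp only:) (intro degree_add_le degree_diff_le)
  qed (simp add: rhsV_def fs_one_def fs_y_over_x_def fs_shift_def fs_dx_def)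
qed

lemma Vsol_eq_rhsV: "Vsol = rhsV Vsol"
proof -
  define V where "V = (\<lambda>n. (rhsV ^^ Suc n) (\<lambda>_. 0) n)"
  have V_fix: "V = rhsV V"
    unfolding V_def by (rule causal_fixpoint[OF causal_rhsV])
  have "inA ((rhsV ^^ k) (\<lambda>_. 0))" for k
    by (induction k) (simp_all add: inA_rhsV, simp add: inA_def)
  then have "inA V" by (simp add: V_def inA_def del: funpow.simps)
  have "Vsol = V"
    unfolding Vsol_def
  proof (rule the_equality)
    show "inA V \<and> V = rhsV V" using \<open>inA V\<close> V_fix ..
    show "W = V" if "inA W \<and> W = rhsV W" for W
      using causal_fixpoint_unique[OF causal_rhsV _ V_fix] that by blast
  qed
  with V_fix show ?thesis by simp
qed

section \<open>Power series in \<open>t = 1/x\<close>\<close>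

lemma fs_mult_eq_fps_mult: "fs_mult f g = fps_nth (Abs_fps f * Abs_fps g)"
  by (auto simp: fs_mult_def fps_mult_nth atLeast0AtMost)

lemma fs_pow_eq_fps_power: "fs_pow f k = fps_nth (Abs_fps f ^ k)"
  by (induction k) (auto simp: fs_one_def fs_mult_eq_fps_mult fps.fps_nth_inverse)

definition fps_log1p :: "'a::field_char_0 poly fps \<Rightarrow> 'a poly fps" where
  "fps_log1p U = Abs_fps (\<lambda>n. \<Sum>k = 1..n. smult ((-1) ^ (k + 1) / of_nat k) ((U ^ k) $ n))"

lemma fs_log_eq_fps_log1p: "fs_log V = fps_nth (fps_log1p (Abs_fps V - 1))"
proof -
  have "Abs_fps (\<lambda>m. V m - fs_one m) = Abs_fps V - 1"
    by (rule fps_ext) (simp add: fs_one_def)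
  then show ?thesis
    unfolding fs_log_def fps_log1p_def fs_pow_eq_fps_power by (simp add: fun_eq_iff)
qed

lemma derivation_power_Suc:
  fixes D :: "'a::comm_ring_1 \<Rightarrow> 'a"
  assumes leibniz: "\<And>f g. D (f * g) = D f * g + f * D g"
  shows "D (u ^ Suc m) = of_nat (Suc m) * u ^ m * D u"
proof (induction m)
  case (Suc m)
  have "D (u ^ Suc (Suc m)) = D u * u ^ Suc m + u * D (u ^ Suc m)"
    by (simp only: power_Suc[of u "Suc m"] leibniz)
  also have "\<dots> = of_nat (Suc (Suc m)) * u ^ Suc m * D u"
    unfolding Suc.IH by (simp add: algebra_simps)
  finally show ?case .
qed simp

lemma fps_mult_nth_eq_0:
  fixes f g :: "'a::comm_ring_1 fps"
  assumes "\<And>i. i \<le> n \<Longrightarrow> f $ i = 0"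
  shows "(f * g) $ n = 0"
  unfolding fps_mult_nth using assms by (intro sum.neutral) auto

lemma fps_log1p_nth_eq_partial_sum:
  assumes U0: "U $ 0 = 0" and "j < N"
  shows "fps_log1p U $ j
    = (\<Sum>i<N. fps_const [:(-1) ^ i / of_nat (Suc i):] * U ^ Suc i) $ j"
proof -
  have "fps_log1p U $ j = (\<Sum>i<j. smult ((-1) ^ i / of_nat (Suc i)) ((U ^ Suc i) $ j))"
    unfolding fps_log1p_def sum_bounds_lt_plus1[symmetric] by simp
  also have "\<dots> = (\<Sum>i<N. smult ((-1) ^ i / of_nat (Suc i)) ((U ^ Suc i) $ j))"
  proof (intro sum.mono_neutral_left ballI)
    show "smult ((-1) ^ i / of_nat (Suc i)) ((U ^ Suc i) $ j) = 0" if "i \<in> {..<N} - {..<j}" for i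
      using that startsby_zero_power_prefix[OF U0, of "Suc i"] by simp
  qed (use \<open>j < N\<close> in auto)
  finally show ?thesis by (simp add: fps_sum_nth)
qed

lemma fps_const_alternating_mult_of_nat:
  "fps_const [:(-1) ^ i / of_nat (Suc i) :: 'a::field_char_0:] * of_nat (Suc i) = (-1) ^ i"
proof -
  have of_nat_eq: "(of_nat (Suc i) :: 'a poly fps) = fps_const [:of_nat (Suc i):]"
    by (simp only: fps_of_nat[symmetric] of_nat_poly)
  have "[:-1::'a:] = -1" by (simp add: one_pCons)
  then have minus_one: "fps_const [:-1::'a:] = -1" by (simp flip: fps_const_neg)
  have "fps_const [:(-1) ^ i / of_nat (Suc i) :: 'a:] * of_nat (Suc i)
      = fps_const ([:(-1) ^ i / of_nat (Suc i):] * [:of_nat (Suc i):])"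
    unfolding of_nat_eq fps_const_mult ..
  also have "\<dots> = fps_const [:-1:] ^ i"
    by (simp add: poly_const_pow fps_const_power del: of_nat_Suc)
  finally show ?thesis unfolding minus_one .
qed

lemma derivation_log1p_partial_sum:
  fixes D :: "'a::field_char_0 poly fps \<Rightarrow> 'a poly fps"
  assumes leibniz: "\<And>f g. D (f * g) = D f * g + f * D g"
    and additive: "\<And>f g. D (f + g) = D f + D g"
    and const: "\<And>c. D (fps_const [:c:]) = 0"
  shows "D (\<Sum>i<N. fps_const [:(-1) ^ i / of_nat (Suc i):] * U ^ Suc i) = (\<Sum>i<N. (-U) ^ i) * D U"
proof (induction N)
  case 0
  show ?case using additive[of 0 0] by simp
next
  case (Suc N)
  define c where "c = fps_const [:(-1) ^ N / of_nat (Suc N) :: 'a:]"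
  have "D (c * U ^ Suc N) = c * (of_nat (Suc N) * U ^ N * D U)"
    unfolding leibniz derivation_power_Suc[OF leibniz] c_def const by simp
  also have "\<dots> = (c * of_nat (Suc N)) * U ^ N * D U"
    by (simp only: mult.assoc)
  also have "\<dots> = (-U) ^ N * D U"
    unfolding c_def fps_const_alternating_mult_of_nat by (simp only: power_minus[of U N])
  finally show ?case
    unfolding sum.lessThan_Suc additive Suc.IH c_def by (simp only: distrib_right)
qed

lemma fps_log1p_derivation:
  fixes D :: "'a::field_char_0 poly fps \<Rightarrow> 'a poly fps"
  assumes local: "\<And>f g n. f $ n = g $ n \<Longrightarrow> D f $ n = D g $ n"
    and leibniz: "\<And>f g. D (f * g) = D f * g + f * D g"
    and additive: "\<And>f g. D (f + g) = D f + D g"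
    and const: "\<And>c. D (fps_const [:c:]) = 0"
    and U0: "U $ 0 = 0"
  shows "(1 + U) * D (fps_log1p U) = D U"
proof (rule fps_ext)
  fix n
  define G where "G = (\<Sum>i<Suc n. fps_const [:(-1) ^ i / of_nat (Suc i):] * U ^ Suc i)"
  have "D (fps_log1p U) $ j = D G $ j" if "j \<le> n" for j
    using fps_log1p_nth_eq_partial_sum[OF U0, of j "Suc n"] that
    by (intro local[where f = "fps_log1p U"]) (simp add: G_def)
  then have "((1 + U) * D (fps_log1p U)) $ n = ((1 + U) * D G) $ n"
    by (simp add: fps_mult_nth)
  also have "(1 + U) * D G = (1 - (-U) ^ Suc n) * D U"
    unfolding G_def derivation_log1p_partial_sum[OF leibniz additive const] one_diff_power_eq
    by (simp only: diff_minus_eq_add mult.assoc)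
  also have "((1 - (-U) ^ Suc n) * D U) $ n = D U $ n - ((-U) ^ Suc n * D U) $ n"
    by (simp only: left_diff_distrib mult_1_left fps_sub_nth)
  also have "((-U) ^ Suc n * D U) $ n = 0"
    using startsby_zero_power_prefix[of "-U" "Suc n"] U0 by (intro fps_mult_nth_eq_0) simp
  finally show "((1 + U) * D (fps_log1p U)) $ n = D U $ n" by simp
qed

\<comment> \<open>For \<open>t = 1/x\<close> this is \<open>-x \<partial>/\<partial>x\<close>.\<close>
definition fps_theta :: "'a::comm_ring_1 fps \<Rightarrow> 'a fps" where
  "fps_theta f = fps_X * fps_deriv f"

lemma fps_theta_nth [simp]: "fps_theta f $ n = of_nat n * f $ n"
  by (cases n) (simp_all add: fps_theta_def fps_X_mult_nth)

lemma fps_theta_mult: "fps_theta (f * g) = fps_theta f * g + f * fps_theta g"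
  by (simp add: fps_theta_def algebra_simps)

lemma fps_theta_add: "fps_theta (f + g) = fps_theta f + fps_theta g"
  by (simp add: fps_theta_def algebra_simps)

lemma fps_theta_diff: "fps_theta (f - g) = fps_theta f - fps_theta g"
  by (simp add: fps_theta_def algebra_simps)

lemma fps_theta_const [simp]: "fps_theta (fps_const c) = 0"
  by (simp add: fps_theta_def)

lemma fps_theta_one [simp]: "fps_theta 1 = 0"
  by (simp add: fps_theta_def)

lemma fps_theta_X_mult: "fps_theta (fps_X * f) = fps_X * f + fps_X * fps_theta f"
  by (simp add: fps_theta_mult fps_theta_def algebra_simps)

definition fps_pderiv :: "'a::idom poly fps \<Rightarrow> 'a poly fps" where
  "fps_pderiv f = Abs_fps (\<lambda>n. pderiv (f $ n))"

lemma fps_pderiv_nth [simp]: "fps_pderiv f $ n = pderiv (f $ n)"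
  by (simp add: fps_pderiv_def)

lemma fps_pderiv_mult: "fps_pderiv (f * g) = fps_pderiv f * g + f * fps_pderiv g"
proof (rule fps_ext)
  fix n
  have "pderiv (\<Sum>i = 0..n. f $ i * g $ (n - i)) = (\<Sum>i = 0..n. pderiv (f $ i * g $ (n - i)))"
    using higher_pderiv_sum[of 1 "\<lambda>i. f $ i * g $ (n - i)" "{0..n}"] by simp
  then have "pderiv (\<Sum>i = 0..n. f $ i * g $ (n - i))
      = (\<Sum>i = 0..n. pderiv (f $ i) * g $ (n - i) + f $ i * pderiv (g $ (n - i)))"
    by (simp add: pderiv_mult add.commute mult.commute)
  then show "fps_pderiv (f * g) $ n = (fps_pderiv f * g + f * fps_pderiv g) $ n"
    by (simp add: fps_mult_nth sum.distrib)
qed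

lemma fps_pderiv_add: "fps_pderiv (f + g) = fps_pderiv f + fps_pderiv g"
  by (rule fps_ext) (simp add: pderiv_add)

lemma fps_pderiv_diff: "fps_pderiv (f - g) = fps_pderiv f - fps_pderiv g"
  by (rule fps_ext) (simp add: pderiv_diff)

lemma fps_pderiv_const: "fps_pderiv (fps_const p) = fps_const (pderiv p)"
  by (rule fps_ext) simp

lemma fps_pderiv_one [simp]: "fps_pderiv 1 = 0"
  by (rule fps_ext) simp

lemma fps_pderiv_X_mult: "fps_pderiv (fps_X * f) = fps_X * fps_pderiv f"
  by (rule fps_ext) (simp add: fps_X_mult_nth)

lemma fps_theta_pderiv: "fps_theta (fps_pderiv f) = fps_pderiv (fps_theta f)"
  by (rule fps_ext) (simp add: pderiv_mult)

section \<open>The solution \<open>V\<close>\<close>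

definition Vfps :: "complex poly fps" where "Vfps = Abs_fps Vsol"

definition Lfps :: "complex poly fps" where "Lfps = fps_log1p (Vfps - 1)"

lemma Vfps_nth_0: "Vfps $ 0 = 1"
  using fun_cong[OF Vsol_eq_rhsV, of 0]
  by (simp add: Vfps_def rhsV_def fs_one_def fs_shift_def fs_dx_def fs_y_over_x_def)

lemma Vfps_nth_Suc: "Vfps $ Suc m = Pp m"
  by (simp add: Vfps_def Pp_def)

lemma Lfps_nth: "Lfps $ n = Qq n"
  by (simp add: Lfps_def Qq_def Vfps_def fs_log_eq_fps_log1p)

lemma Vfps_equation:
  "Vfps = 1 + fps_X * fps_const [:0, 1:] - fps_X * Vfps + fps_X * fps_theta Vfps
     - fps_X * fps_pderiv Vfps + fps_X * Lfps"
proof (rule fps_ext)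
  fix n
  show "Vfps $ n = (1 + fps_X * fps_const [:0, 1:] - fps_X * Vfps + fps_X * fps_theta Vfps
     - fps_X * fps_pderiv Vfps + fps_X * Lfps) $ n"
    using fun_cong[OF Vsol_eq_rhsV, of n] Lfps_nth
    by (cases n) (auto simp: Vfps_def Qq_def rhsV_def fs_one_def fs_shift_def fs_dx_def
        fs_dy_def fs_y_over_x_def fps_X_mult_nth)
qed

lemma Vfps_mult_theta_Lfps: "Vfps * fps_theta Lfps = fps_theta Vfps"
proof -
  have "(1 + (Vfps - 1)) * fps_theta Lfps = fps_theta (Vfps - 1)"
    unfolding Lfps_def
    by (rule fps_log1p_derivation) (simp_all add: fps_theta_mult fps_theta_add Vfps_nth_0)
  then show ?thesis by (simp add: fps_theta_diff)
qed

lemma Vfps_mult_pderiv_Lfps: "Vfps * fps_pderiv Lfps = fps_pderiv Vfps"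
proof -
  have "(1 + (Vfps - 1)) * fps_pderiv Lfps = fps_pderiv (Vfps - 1)"
    unfolding Lfps_def
    by (rule fps_log1p_derivation)
      (simp_all add: fps_pderiv_mult fps_pderiv_add fps_pderiv_const Vfps_nth_0)
  then show ?thesis by (simp add: fps_pderiv_diff)
qed

lemma eq_0_if_homogeneous_equation:
  fixes a H :: "'a::idom poly fps"
  assumes a0: "a $ 0 = 1"
    and H: "a * H = fps_X * (a * fps_theta H - a * H - a * fps_pderiv H + H)"
  shows "H = 0"
proof -
  have "H $ n = 0" for n
  proof (induction n rule: less_induct)
    case (less n)
    have "(a * H) $ n = a $ 0 * H $ n + (\<Sum>i = 1..n. a $ i * H $ (n - i))"
      by (simp add: fps_mult_nth sum.atLeast_Suc_atMost)
    also have "(\<Sum>i = 1..n. a $ i * H $ (n - i)) = 0"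
      using less by (intro sum.neutral) auto
    finally have "(a * H) $ n = H $ n" using a0 by simp
    moreover have "(fps_X * (a * fps_theta H - a * H - a * fps_pderiv H + H)) $ n = 0"
    proof (cases n)
      case (Suc m)
      have low: "H $ j = 0" "fps_theta H $ j = 0" "fps_pderiv H $ j = 0" if "j \<le> m" for j
        using less Suc that by auto
      have "(a * K) $ m = 0" if "\<And>j. j \<le> m \<Longrightarrow> K $ j = 0" for K
        unfolding mult.commute[of a] by (rule fps_mult_nth_eq_0) (use that in auto)
      then show ?thesis using low Suc by (simp add: fps_X_mult_nth)
    qed simp
    ultimately show ?case using H by simp
  qed
  then show ?thesis by (intro fps_ext) simp
qed

lemma pderiv_defect_Vfps_eq_0:
  "fps_X * Vfps - fps_X * fps_theta Vfps + fps_X * fps_pderiv Vfps - fps_pderiv Vfps = 0"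
  (is "?H = 0")
proof (rule eq_0_if_homogeneous_equation[OF Vfps_nth_0])
  define Y :: "complex poly fps" where "Y = fps_const [:0, 1:]"
  have theta_Y: "fps_theta Y = 0" and pderiv_Y: "fps_pderiv Y = 1"
    by (simp_all add: Y_def fps_pderiv_const pderiv_pCons)
  note rules = fps_theta_add fps_theta_diff fps_theta_X_mult fps_theta_one fps_theta_pderiv
    fps_pderiv_add fps_pderiv_diff fps_pderiv_X_mult fps_pderiv_one theta_Y pderiv_Y
  note E = Vfps_equation[folded Y_def]
  note E_theta = arg_cong[where f = fps_theta, OF E, unfolded rules]
  note E_pderiv = arg_cong[where f = fps_pderiv, OF E, unfolded rules]
  show "Vfps * ?H = fps_X * (Vfps * fps_theta ?H - Vfps * ?H - Vfps * fps_pderiv ?H + ?H)"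
    unfolding rules
    using E E_theta E_pderiv Vfps_mult_theta_Lfps Vfps_mult_pderiv_Lfps by algebra
qed

lemma pderiv_Pp_Suc: "pderiv (Pp (Suc m)) = pderiv (Pp m) - of_nat m * Pp m"
proof -
  have "(fps_X * Vfps - fps_X * fps_theta Vfps + fps_X * fps_pderiv Vfps - fps_pderiv Vfps)
      $ Suc (Suc m) = 0"
    unfolding pderiv_defect_Vfps_eq_0 by simp
  then show ?thesis by (simp add: fps_X_mult_nth Vfps_nth_Suc algebra_simps)
qed

lemma X_mult_Lfps: "fps_X * Lfps = Vfps + fps_pderiv Vfps - 1 - fps_X * fps_const [:0, 1:]"
  using Vfps_equation pderiv_defect_Vfps_eq_0 by algebra

lemma Pp_0: "Pp 0 = [:-1, 1:]"
proof -
  have "Qq 0 = 0" by (simp add: Qq_def fs_log_def)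
  with arg_cong[where f = "\<lambda>f. f $ 1", OF Vfps_equation] show ?thesis
    by (simp add: Vfps_nth_0 Vfps_nth_Suc[of 0, simplified] Lfps_nth fps_X_mult_nth one_pCons)
qed

lemma Qq_Suc: "Qq (Suc m) = Pp (Suc m) + pderiv (Pp (Suc m))"
  using arg_cong[where f = "\<lambda>f. f $ Suc (Suc m)", OF X_mult_Lfps]
  by (simp add: fps_X_mult_nth Lfps_nth Vfps_nth_Suc)

lemma pderiv_Qq_Suc:
  assumes "1 \<le> m"
  shows "pderiv (Qq (Suc m)) = pderiv (Qq m) - of_nat m * Qq m"
proof -
  have Qq_m: "Qq m = Pp m + pderiv (Pp m)"
    using assms Qq_Suc[of "m - 1"] by simp
  note P' = pderiv_Pp_Suc[of m]
  have P'': "pderiv (pderiv (Pp (Suc m))) = pderiv (pderiv (Pp m)) - of_nat m * pderiv (Pp m)"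
    unfolding P' by (simp add: pderiv_diff pderiv_mult)
  show ?thesis
    unfolding Qq_Suc[of m] Qq_m pderiv_add P'' P' by (simp add: pderiv_diff pderiv_mult algebra_simps)
qed

lemma coeff_Suc_if_pderiv_eq:
  fixes R S :: "'a::idom poly"
  assumes "pderiv R = pderiv S - of_nat m * S"
  shows "of_nat (Suc i) * coeff R (Suc i) = of_nat (Suc i) * coeff S (Suc i) - of_nat m * coeff S i"
  using arg_cong[where f = "\<lambda>p. coeff p i", OF assms]
  by (simp add: coeff_pderiv of_nat_poly del: of_nat_Suc)

lemma degree_Pp:
  assumes "1 \<le> n"
  shows "degree (Pp n) \<le> n"
proof -
  have "coeff (Pp n) j = 0" if "n < j" for j
    using assms that
  proof (induction n arbitrary: j rule: nat_induct_at_least)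
    case base
    then obtain i where j: "j = Suc i" and "1 \<le> i" by (cases j) auto
    then have "coeff (Pp 0) j = 0" by (simp add: Pp_0 coeff_pCons split: nat.split)
    then show ?case
      using coeff_Suc_if_pderiv_eq[OF pderiv_Pp_Suc[of 0], of i] j by (simp del: of_nat_Suc)
  next
    case (Suc n)
    then obtain i where j: "j = Suc i" and "n < i" by (cases j) auto
    with Suc.IH show ?case
      using coeff_Suc_if_pderiv_eq[OF pderiv_Pp_Suc[of n], of i] by (simp del: of_nat_Suc)
  qed
  then show ?thesis by (intro degree_le) auto
qed

lemma degree_Qq:
  assumes "1 \<le> n"
  shows "degree (Qq n) \<le> n"
proof -
  obtain m where n: "n = Suc m" using assms by (cases n) auto
  show ?thesis
    unfolding n Qq_Suc
    using degree_Pp[of "Suc m"] degree_pderiv[of "Pp (Suc m)"] by (intro degree_add_le) auto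
qed

section \<open>Coefficients\<close>

text \<open>
  The normalisation of \<open>P(n)\<close> and \<open>Q(n)\<close> by \<open>a\<close> and \<open>b\<close>, indexed by the power \<open>j = n - k\<close> of \<open>y\<close>.
  The entry \<open>j = n + 1\<close>, i.e. \<open>k = -1\<close>, vanishes by the degree bound for \<open>n \<ge> 1\<close> and is the
  convention \<open>a(0,-1) = 1\<close> for \<open>P(0) = y - 1\<close>.
\<close>
definition scaled_coeffs :: "(nat \<Rightarrow> int \<Rightarrow> complex) \<Rightarrow> (nat \<Rightarrow> complex poly) \<Rightarrow> nat \<Rightarrow> bool" where
  "scaled_coeffs c R n \<longleftrightarrow>
     (\<forall>j \<le> Suc n. c n (int n - int j) = (-1) ^ (j + 1) * fact n * coeff (R n) j)"

lemma scaled_coeffsD: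
  "scaled_coeffs c R n \<Longrightarrow> j \<le> Suc n
    \<Longrightarrow> c n (int n - int j) = (-1) ^ (j + 1) * fact n * coeff (R n) j"
  unfolding scaled_coeffs_def by blast

lemma neg_one_power_mult_diff:
  assumes "j \<le> n"
  shows "(-1::'a::ring_1) ^ n * (-1) ^ (n - j) = (-1) ^ j"
proof -
  have "n + (n - j) = j + 2 * (n - j)" using assms by simp
  then have "(-1::'a) ^ n * (-1) ^ (n - j) = (-1) ^ j * ((-1) ^ 2) ^ (n - j)"
    by (metis power_add power_mult)
  then show ?thesis by simp
qed

lemma scaled_coeffsI:
  assumes c: "\<And>k. c n k = (if 0 \<le> k \<and> k \<le> int n
      then (-1) ^ (n + 1) * (-1) ^ nat k * fact n * coeff (R n) (n - nat k) else 0)"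
    and deg: "degree (R n) \<le> n"
  shows "scaled_coeffs c R n"
  unfolding scaled_coeffs_def
proof (intro allI impI)
  fix j assume "j \<le> Suc n"
  then consider "j \<le> n" | "j = Suc n" by linarith
  then show "c n (int n - int j) = (-1) ^ (j + 1) * fact n * coeff (R n) j"
  proof cases
    case 1
    then have "nat (int n - int j) = n - j" and "n - (n - j) = j" by simp_all
    with 1 show ?thesis by (simp add: c neg_one_power_mult_diff)
  next
    case 2
    with deg show ?thesis by (simp add: c coeff_eq_0)
  qed
qed

lemma scaled_coeffs_acoef: "scaled_coeffs acoef Pp n"
proof (cases n)
  case 0
  then show ?thesis by (auto simp: scaled_coeffs_def acoef_def Pp_0 le_Suc_eq)
next
  case (Suc m)
  then show ?thesis using degree_Pp[of n] by (intro scaled_coeffsI) (simp_all add: acoef_def)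
qed

lemma scaled_coeffs_bcoef: "1 \<le> n \<Longrightarrow> scaled_coeffs bcoef Qq n"
  using degree_Qq[of n] by (intro scaled_coeffsI) (simp_all add: bcoef_def)

lemma scaled_coeffs_recurrence:
  assumes c_m: "scaled_coeffs c R m" and c_Suc_m: "scaled_coeffs c R (Suc m)"
    and R: "pderiv (R (Suc m)) = pderiv (R m) - of_nat m * R m"
    and k: "0 \<le> k" "k < int (Suc m)"
  shows "c (Suc m) k = of_nat (Suc m) * c m (k - 1)
      + (of_nat (Suc m) * of_nat m / of_int (int (Suc m) - k)) * c m k"
proof -
  define i where "i = m - nat k"
  have i: "i \<le> m" "k = int m - int i" "k - 1 = int m - int (Suc i)"
    "k = int (Suc m) - int (Suc i)" "int (Suc m) - k = int (Suc i)"
    using k by (auto simp: i_def)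
  have c1: "c (Suc m) k = (-1) ^ (Suc i + 1) * fact (Suc m) * coeff (R (Suc m)) (Suc i)"
    unfolding i(4) by (rule scaled_coeffsD[OF c_Suc_m]) (use i in simp)
  have c2: "c m (k - 1) = (-1) ^ (Suc i + 1) * fact m * coeff (R m) (Suc i)"
    unfolding i(3) by (rule scaled_coeffsD[OF c_m]) (use i in simp)
  have c3: "c m k = (-1) ^ (i + 1) * fact m * coeff (R m) i"
    unfolding i(2) by (rule scaled_coeffsD[OF c_m]) (use i in simp)
  have "of_nat (Suc i) * coeff (R (Suc m)) (Suc i)
      = of_nat (Suc i) * coeff (R m) (Suc i) - of_nat m * coeff (R m) i"
    by (rule coeff_Suc_if_pderiv_eq[OF R])
  then have R_coeff: "coeff (R (Suc m)) (Suc i)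
      = coeff (R m) (Suc i) - of_nat m * coeff (R m) i / of_nat (Suc i)"
    by (simp add: field_simps del: of_nat_Suc)
  show ?thesis
    unfolding c1 c2 c3 i(5) R_coeff of_int_of_nat_eq by (simp add: field_simps del: of_nat_Suc)
qed

lemma acoef_recurrence:
  assumes "1 \<le> n" "0 \<le> k" "k < int n"
  shows "acoef n k = of_nat n * acoef (n - 1) (k - 1)
      + (of_nat n * of_nat (n - 1) / of_int (int n - k)) * acoef (n - 1) k"
proof -
  obtain m where "n = Suc m" using assms by (cases n) auto
  with assms show ?thesis
    using scaled_coeffs_recurrence[OF scaled_coeffs_acoef scaled_coeffs_acoef pderiv_Pp_Suc] by simp
qed

lemma bcoef_recurrence:
  assumes "2 \<le> n" "0 \<le> k" "k < int n"
  shows "bcoef n k = of_nat n * bcoef (n - 1) (k - 1)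
      + (of_nat n * of_nat (n - 1) / of_int (int n - k)) * bcoef (n - 1) k"
proof -
  obtain m where "n = Suc m" and "1 \<le> m" using assms by (cases n) auto
  with assms show ?thesis
    using scaled_coeffs_recurrence[OF scaled_coeffs_bcoef scaled_coeffs_bcoef pderiv_Qq_Suc]
    by simp
qed

lemma acoef_eq_bcoef_add:
  assumes "1 \<le> n" "0 \<le> k" "k \<le> int n"
  shows "acoef n k = bcoef n k + of_int (int n - k + 1) * acoef n (k - 1)"
proof -
  obtain m where n: "n = Suc m" using assms by (cases n) auto
  define j where "j = n - nat k"
  have j: "j \<le> n" "k = int n - int j" "k - 1 = int n - int (Suc j)" "int n - k + 1 = int (Suc j)"
    using assms by (auto simp: j_def)
  have "coeff (Qq n) j = coeff (Pp n) j + of_nat (Suc j) * coeff (Pp n) (Suc j)"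
    by (simp add: n Qq_Suc coeff_pderiv)
  moreover have "acoef n k = (-1) ^ (j + 1) * fact n * coeff (Pp n) j"
    unfolding j(2) by (rule scaled_coeffsD[OF scaled_coeffs_acoef]) (use j in simp)
  moreover have "acoef n (k - 1) = (-1) ^ (Suc j + 1) * fact n * coeff (Pp n) (Suc j)"
    unfolding j(3) by (rule scaled_coeffsD[OF scaled_coeffs_acoef]) (use j in simp)
  moreover have "bcoef n k = (-1) ^ (j + 1) * fact n * coeff (Qq n) j"
    unfolding j(2) by (rule scaled_coeffsD[OF scaled_coeffs_bcoef[OF assms(1)]]) (use j in simp)
  ultimately show ?thesis
    unfolding j(4) of_int_of_nat_eq by (simp add: algebra_simps)
qed

lemma Qq_convolution:
  "(\<Sum>i = 1..m. of_nat i * Qq i * Pp (m - i)) + of_nat (Suc m) * Qq (Suc m) = of_nat (Suc m) * Pp m"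
proof -
  define f where "f i = of_nat i * Qq i * Vfps $ (Suc m - i)" for i
  have "(\<Sum>i = 0..Suc m. f i) = (fps_theta Lfps * Vfps) $ Suc m"
    by (simp add: f_def fps_mult_nth Lfps_nth)
  also have "\<dots> = of_nat (Suc m) * Pp m"
    using Vfps_mult_theta_Lfps by (simp add: mult.commute Vfps_nth_Suc del: of_nat_Suc)
  also have "(\<Sum>i = 0..Suc m. f i) = f 0 + (\<Sum>i = 1..m. f i) + f (Suc m)"
    by (simp add: sum.atLeast_Suc_atMost sum.cl_ivl_Suc)
  also have "(\<Sum>i = 1..m. f i) = (\<Sum>i = 1..m. of_nat i * Qq i * Pp (m - i))"
    by (intro sum.cong refl) (simp add: f_def Suc_diff_le Vfps_nth_Suc)
  finally show ?thesis by (simp add: f_def Vfps_nth_0)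
qed

lemma Qq_convolution_coeff_0:
  "(\<Sum>i = 1..m. of_nat i * coeff (Qq i) 0 * coeff (Pp (m - i)) 0)
    + of_nat (Suc m) * coeff (Qq (Suc m)) 0 = of_nat (Suc m) * coeff (Pp m) 0"
  using arg_cong[where f = "\<lambda>r. coeff r 0", OF Qq_convolution[of m]]
  by (simp add: coeff_sum coeff_mult_0 of_nat_poly mult.assoc del: of_nat_Suc)

lemma acoef_diag: "acoef n (int n) = - fact n * coeff (Pp n) 0"
  using scaled_coeffsD[OF scaled_coeffs_acoef, where n = n and j = 0] by simp

lemma bcoef_diag:
  assumes "1 \<le> n"
  shows "bcoef n (int n) = - fact n * coeff (Qq n) 0"
  using scaled_coeffsD[OF scaled_coeffs_bcoef[OF assms], of 0] by simp

lemma binomial_sum_bcoef_acoef_diag: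
  "(\<Sum>k = 1..m. of_nat (m choose k) * of_nat k * bcoef k (int k) * acoef (m - k) (int (m - k)))
    = fact m * (\<Sum>k = 1..m. of_nat k * coeff (Qq k) 0 * coeff (Pp (m - k)) 0)"
  unfolding sum_distrib_left
proof (intro sum.cong refl)
  fix k assume "k \<in> {1..m}"
  then have "1 \<le> k" "k \<le> m" by simp_all
  have "of_nat (fact k * fact (m - k) * (m choose k)) = (of_nat (fact m) :: complex)"
    using binomial_fact_lemma[OF \<open>k \<le> m\<close>] by simp
  then have binom: "of_nat (m choose k) * fact k * fact (m - k) = (fact m :: complex)"
    by (simp add: algebra_simps)
  have "of_nat (m choose k) * of_nat k * bcoef k (int k) * acoef (m - k) (int (m - k))
      = (of_nat (m choose k) * fact k * fact (m - k)) * (of_nat k * coeff (Qq k) 0 * coeff (Pp (m - k)) 0)"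
    unfolding acoef_diag bcoef_diag[OF \<open>1 \<le> k\<close>] by (simp add: mult_ac)
  then show "of_nat (m choose k) * of_nat k * bcoef k (int k) * acoef (m - k) (int (m - k))
      = fact m * (of_nat k * coeff (Qq k) 0 * coeff (Pp (m - k)) 0)"
    unfolding binom .
qed

lemma bcoef_diagonal:
  assumes "1 \<le> n"
  shows "bcoef n (int n) = of_nat n * acoef (n - 1) (int n - 1)
      + (\<Sum>k = 1..n - 1. of_nat ((n - 1) choose k) * of_nat k * bcoef k (int k)
          * acoef (n - k - 1) (int (n - k - 1)))"
proof -
  obtain m where n: "n = Suc m" using assms by (cases n) auto
  have "(\<Sum>k = 1..m. of_nat k * coeff (Qq k) 0 * coeff (Pp (m - k)) 0)
      = of_nat (Suc m) * coeff (Pp m) 0 - of_nat (Suc m) * coeff (Qq (Suc m)) 0"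
    by (simp only: Qq_convolution_coeff_0[symmetric] add_diff_cancel_right')
  then have "(\<Sum>k = 1..n - 1. of_nat ((n - 1) choose k) * of_nat k * bcoef k (int k)
      * acoef (n - k - 1) (int (n - k - 1)))
      = fact m * (of_nat (Suc m) * coeff (Pp m) 0 - of_nat (Suc m) * coeff (Qq (Suc m)) 0)"
    using binomial_sum_bcoef_acoef_diag[of m] by (simp add: n)
  moreover have "acoef (n - 1) (int n - 1) = - fact m * coeff (Pp m) 0"
    using acoef_diag[of m] by (simp add: n)
  ultimately show ?thesis
    using bcoef_diag[OF assms] by (simp add: n algebra_simps del: of_nat_Suc)
qed

theorem theorem4p8:
  shows "(\<forall>n k. n \<ge> 1 \<and> 0 \<le> k \<and> k < int n \<longrightarrow>
            acoef n k = of_nat n * acoef (n - 1) (k - 1)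
              + (of_nat n * of_nat (n - 1) / of_int (int n - k)) * acoef (n - 1) k)
       \<and> (\<forall>n k. n \<ge> 2 \<and> 0 \<le> k \<and> k < int n \<longrightarrow>
            bcoef n k = of_nat n * bcoef (n - 1) (k - 1)
              + (of_nat n * of_nat (n - 1) / of_int (int n - k)) * bcoef (n - 1) k)
       \<and> (\<forall>n k. n \<ge> 1 \<and> 0 \<le> k \<and> k \<le> int n \<longrightarrow>
            acoef n k = bcoef n k + of_int (int n - k + 1) * acoef n (k - 1))
       \<and> (\<forall>n. n \<ge> 1 \<longrightarrow>
            bcoef n (int n) = of_nat n * acoef (n - 1) (int n - 1)
              + (\<Sum>k = 1..n - 1. of_nat ((n - 1) choose k) * of_nat k * bcoef k (int k)
                   * acoef (n - k - 1) (int (n - k - 1))))"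
  using acoef_recurrence bcoef_recurrence acoef_eq_bcoef_add bcoef_diagonal by blast

end
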